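(* For every $n\ge 1$, $|\mathcal{ORCT}_n|=(n+1)2^{n-1}-n$.
   Context: $X_n=\{1,2,\dots,n\}$ with its usual order. A map $\alpha:X_n\to X_n$ is order-preserving if $x\le y$ implies $x\alpha\le y\alpha$, order-reversing if $x\le y$ implies $x\alpha\ge y\alpha$, and a contraction if $|x\alpha-y\alpha|\le|x-y|$ for all $x,y$. $\mathcal{ORCT}_n$ is the set of all maps $X_n\to X_n$ (defined on all of $X_n$) that are contractions and are either order-preserving or order-reversing. *)

theory Defs
  imports Main "HOL-Library.FuncSet"
begin

text \<open>Full transformations of X_n = {1..n} are represented as extensional
functions in PiE {1..n} (constant {1..n}) (value undefined outside X_n), so that
distinct maps correspond to distinct functions.\<close>

definition order_preserving_on :: "nat set \<Rightarrow> (nat \<Rightarrow> nat) \<Rightarrow> bool" where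
  "order_preserving_on X f \<longleftrightarrow> (\<forall>x\<in>X. \<forall>y\<in>X. x \<le> y \<longrightarrow> f x \<le> f y)"

definition order_reversing_on :: "nat set \<Rightarrow> (nat \<Rightarrow> nat) \<Rightarrow> bool" where
  "order_reversing_on X f \<longleftrightarrow> (\<forall>x\<in>X. \<forall>y\<in>X. x \<le> y \<longrightarrow> f x \<ge> f y)"

definition contraction_on :: "nat set \<Rightarrow> (nat \<Rightarrow> nat) \<Rightarrow> bool" where
  "contraction_on X f \<longleftrightarrow>
     (\<forall>x\<in>X. \<forall>y\<in>X. \<bar>int (f x) - int (f y)\<bar> \<le> \<bar>int x - int y\<bar>)"

definition ORCT :: "nat \<Rightarrow> (nat \<Rightarrow> nat) set" where
  "ORCT n = {f \<in> {1..n} \<rightarrow>\<^sub>E {1..n}.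
     contraction_on {1..n} f \<and>
     (order_preserving_on {1..n} f \<or> order_reversing_on {1..n} f)}"

end

theory Submission
  imports Defs
begin

text \<open>An order-preserving contraction of X_n moves up by 0 or 1 at each step, so it
is determined by its value a at 1 and the set S \<subseteq> {1..<n} of points after which it
steps up, subject only to a + |S| \<le> n. So |OCT_n| is the sum of n - |S| over all S,
and pairing each S with its complement in {1..<n} gives 2|OCT_n| = (n+1) 2^(n-1).
Composing with the reflection x \<mapsto> n + 1 - x matches order-preserving with
order-reversing contractions, and a map of both kinds is constant; inclusion-exclusion
finishes the count.\<close>

definition OCT :: "nat \<Rightarrow> (nat \<Rightarrow> nat) set" where
  "OCT n = {f \<in> {1..n} \<rightarrow>\<^sub>E {1..n}. contraction_on {1..n} f \<and> order_preserving_on {1..n} f}"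

definition RCT :: "nat \<Rightarrow> (nat \<Rightarrow> nat) set" where
  "RCT n = {f \<in> {1..n} \<rightarrow>\<^sub>E {1..n}. contraction_on {1..n} f \<and> order_reversing_on {1..n} f}"

lemma ORCT_eq_OCT_Un_RCT: "ORCT n = OCT n \<union> RCT n"
  by (auto simp: ORCT_def OCT_def RCT_def)

lemma finite_OCT: "finite (OCT n)" and finite_RCT: "finite (RCT n)"
  unfolding OCT_def RCT_def
  by (rule finite_subset[OF _ finite_PiE[of "{1..n}" "\<lambda>_. {1..n}"]], auto)+

definition staircase :: "nat \<Rightarrow> nat \<Rightarrow> nat set \<Rightarrow> nat \<Rightarrow> nat" where
  "staircase n a S = (\<lambda>i. if i \<in> {1..n} then a + card (S \<inter> {..<i}) else undefined)"

lemma card_Int_lessThan_Suc: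
  "card (S \<inter> {..<Suc i}) = card (S \<inter> {..<i}) + (if i \<in> S then 1 else 0)"
  by (simp add: lessThan_Suc Int_insert_right)

lemma card_Int_lessThan_mono:
  "(x::nat) \<le> y \<Longrightarrow> card (S \<inter> {..<x}) \<le> card (S \<inter> {..<y})"
  by (intro card_mono) auto

lemma card_Int_lessThan_le_add:
  "(x::nat) \<le> y \<Longrightarrow> card (S \<inter> {..<y}) \<le> card (S \<inter> {..<x}) + (y - x)"
proof (induction y rule: dec_induct)
  case (step m)
  then show ?case by (auto simp: card_Int_lessThan_Suc)
qed simp

lemma card_le_of_subset_atLeastLessThan: "S \<subseteq> {1..<n} \<Longrightarrow> card S \<le> n - 1"
  using card_mono[of "{1..<n}" S] by simp

lemma staircase_in_OCT:
  assumes S: "S \<subseteq> {1..<n}" and a: "1 \<le> a" "a + card S \<le> n"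
  shows "staircase n a S \<in> OCT n"
proof -
  have "finite S" using S by (rule finite_subset) simp
  then have "a + card (S \<inter> {..<i}) \<le> n" for i
    using card_mono[of S "S \<inter> {..<i}"] a by auto
  then have "staircase n a S \<in> {1..n} \<rightarrow>\<^sub>E {1..n}"
    using a by (auto simp: staircase_def)
  moreover have "order_preserving_on {1..n} (staircase n a S)"
    by (auto simp: order_preserving_on_def staircase_def card_Int_lessThan_mono)
  moreover have "contraction_on {1..n} (staircase n a S)"
  proof -
    have "\<bar>int (card (S \<inter> {..<x})) - int (card (S \<inter> {..<y}))\<bar> \<le> \<bar>int x - int y\<bar>" for x y
      using card_Int_lessThan_le_add[of x y S] card_Int_lessThan_mono[of x y S]
        card_Int_lessThan_le_add[of y x S] card_Int_lessThan_mono[of y x S]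
      by (cases "x \<le> y") linarith+
    then show ?thesis by (simp add: contraction_on_def staircase_def)
  qed
  ultimately show ?thesis by (simp add: OCT_def)
qed

lemma OCT_eq_staircase:
  assumes f: "f \<in> OCT n" and n: "1 \<le> n"
  defines "S \<equiv> {j \<in> {1..<n}. f (Suc j) \<noteq> f j}"
  shows "f = staircase n (f 1) S" and "1 \<le> f 1" and "f 1 + card S \<le> n"
proof -
  have PiE: "f \<in> {1..n} \<rightarrow>\<^sub>E {1..n}" and contr: "contraction_on {1..n} f"
    and mono: "order_preserving_on {1..n} f" using f by (auto simp: OCT_def)
  have f_eq: "f i = f 1 + card (S \<inter> {..<i})" if "1 \<le> i" "i \<le> n" for i
    using that
  proof (induction i rule: dec_induct)
    case base
    then show ?case by (auto simp: S_def lessThan_Suc)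
  next
    case (step i)
    then have "i \<in> {1..n}" "Suc i \<in> {1..n}" by auto
    then have "f i \<le> f (Suc i)" "f (Suc i) \<le> f i + 1"
      using mono contr unfolding order_preserving_on_def contraction_on_def
      by (fastforce, force)
    moreover have "i \<in> S \<longleftrightarrow> f (Suc i) \<noteq> f i" using step by (auto simp: S_def)
    ultimately show ?case using step by (auto simp: card_Int_lessThan_Suc)
  qed
  show "f = staircase n (f 1) S"
  proof
    fix i show "f i = staircase n (f 1) S i"
      using f_eq[of i] PiE by (cases "i \<in> {1..n}") (auto simp: staircase_def)
  qed
  have "S \<inter> {..<n} = S" by (auto simp: S_def)
  then have "f n = f 1 + card S" using f_eq[of n] n by simp
  moreover have "f n \<le> n" "1 \<le> f 1" using PiE n by auto
  ultimately show "1 \<le> f 1" "f 1 + card S \<le> n" by simp_all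
qed

lemma staircase_inject:
  assumes "S \<subseteq> {1..<n}" "S' \<subseteq> {1..<n}" "1 \<le> n"
    and eq: "staircase n a S = staircase n a' S'"
  shows "a = a'" and "S = S'"
proof -
  have val: "a + card (S \<inter> {..<i}) = a' + card (S' \<inter> {..<i})" if "i \<in> {1..n}" for i
    using fun_cong[OF eq, of i] that by (simp add: staircase_def)
  have "S \<inter> {..<1} = {}" "S' \<inter> {..<1} = {}" using assms(1,2) by auto
  moreover have "1 \<in> {1..n}" using \<open>1 \<le> n\<close> by simp
  ultimately show "a = a'" using val by (metis add.right_neutral card.empty)
  have "i \<in> S \<longleftrightarrow> i \<in> S'" for i
  proof (cases "i \<in> {1..<n}")
    case True
    then have "a + card (S \<inter> {..<Suc i}) = a' + card (S' \<inter> {..<Suc i})"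
      and "a + card (S \<inter> {..<i}) = a' + card (S' \<inter> {..<i})"
      using val by auto
    then show ?thesis
      using \<open>a = a'\<close> by (simp add: card_Int_lessThan_Suc split: if_splits)
  qed (use assms(1,2) in auto)
  then show "S = S'" by auto
qed

lemma bij_betw_staircase_OCT:
  assumes n: "1 \<le> n"
  shows "bij_betw (\<lambda>(S, a). staircase n a S) (SIGMA S:Pow {1..<n}. {1..n - card S}) (OCT n)"
proof (rule bij_betw_imageI)
  show "inj_on (\<lambda>(S, a). staircase n a S) (SIGMA S:Pow {1..<n}. {1..n - card S})"
  proof (rule inj_onI)
    fix p q
    assume "p \<in> (SIGMA S:Pow {1..<n}. {1..n - card S})" "q \<in> (SIGMA S:Pow {1..<n}. {1..n - card S})"
      "(\<lambda>(S, a). staircase n a S) p = (\<lambda>(S, a). staircase n a S) q"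
    moreover obtain S a S' a' where pq: "p = (S, a)" "q = (S', a')" by fastforce
    ultimately have "S \<subseteq> {1..<n}" "S' \<subseteq> {1..<n}" "staircase n a S = staircase n a' S'"
      by auto
    from staircase_inject[OF this(1,2) n this(3)] show "p = q" by (simp add: pq)
  qed
  show "(\<lambda>(S, a). staircase n a S) ` (SIGMA S:Pow {1..<n}. {1..n - card S}) = OCT n"
  proof (intro equalityI subsetI)
    fix f assume f: "f \<in> OCT n"
    define S where "S = {j \<in> {1..<n}. f (Suc j) \<noteq> f j}"
    have "(S, f 1) \<in> (SIGMA S:Pow {1..<n}. {1..n - card S})"
      using OCT_eq_staircase(2,3)[OF f n] unfolding S_def by auto
    moreover have "f = (\<lambda>(S, a). staircase n a S) (S, f 1)"
      using OCT_eq_staircase(1)[OF f n] unfolding S_def by simp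
    ultimately show "f \<in> (\<lambda>(S, a). staircase n a S) ` (SIGMA S:Pow {1..<n}. {1..n - card S})"
      by (rule rev_image_eqI)
  next
    fix f assume "f \<in> (\<lambda>(S, a). staircase n a S) ` (SIGMA S:Pow {1..<n}. {1..n - card S})"
    then obtain S a where S: "S \<subseteq> {1..<n}" and a: "a \<in> {1..n - card S}"
      and f: "f = staircase n a S" by auto
    have "card S \<le> n - 1" using S by (rule card_le_of_subset_atLeastLessThan)
    with a have "1 \<le> a" "a + card S \<le> n" by auto
    with S show "f \<in> OCT n" unfolding f by (rule staircase_in_OCT)
  qed
qed

lemma card_OCT: "1 \<le> n \<Longrightarrow> card (OCT n) = (\<Sum>S\<in>Pow {1..<n}. n - card S)"
  using bij_betw_same_card[OF bij_betw_staircase_OCT] by (simp add: card_SigmaI)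

lemma double_sum_Pow_diff_card:
  assumes "1 \<le> n"
  shows "2 * (\<Sum>S\<in>Pow {1..<n}. n - card S) = (n + 1) * 2 ^ (n - 1)"
proof -
  let ?A = "{1..<n}"
  have card_le: "card S \<le> n - 1" if "S \<in> Pow ?A" for S
    using that card_le_of_subset_atLeastLessThan by blast
  have "(\<Sum>S\<in>Pow ?A. n - card S) = (\<Sum>S\<in>Pow ?A. n - card (?A - S))"
    by (rule sum.reindex_bij_witness[where i = "\<lambda>S. ?A - S" and j = "\<lambda>S. ?A - S"])
       (auto simp: Diff_Diff_Int Int_absorb1)
  also have "\<dots> = (\<Sum>S\<in>Pow ?A. 1 + card S)"
  proof (rule sum.cong)
    fix S assume "S \<in> Pow ?A"
    with card_le[of S] assms show "n - card (?A - S) = 1 + card S"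
      by (auto simp: card_Diff_subset finite_subset)
  qed simp
  finally have "2 * (\<Sum>S\<in>Pow ?A. n - card S)
      = (\<Sum>S\<in>Pow ?A. n - card S) + (\<Sum>S\<in>Pow ?A. 1 + card S)"
    by (simp only: mult_2)
  also have "\<dots> = (\<Sum>S\<in>Pow ?A. (n - card S) + (1 + card S))"
    by (rule sum.distrib[symmetric])
  also have "\<dots> = (\<Sum>S\<in>Pow ?A. n + 1)"
  proof (rule sum.cong)
    fix S assume "S \<in> Pow ?A"
    with card_le[of S] assms show "n - card S + (1 + card S) = n + 1" by simp
  qed simp
  finally show ?thesis by (simp add: card_Pow)
qed

definition reflect :: "nat \<Rightarrow> (nat \<Rightarrow> nat) \<Rightarrow> nat \<Rightarrow> nat" where
  "reflect n f = (\<lambda>i. if i \<in> {1..n} then n + 1 - f i else undefined)"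

lemma reflect_reflect:
  assumes "f \<in> {1..n} \<rightarrow>\<^sub>E {1..n}"
  shows "reflect n (reflect n f) = f"
proof
  fix i show "reflect n (reflect n f) i = f i"
  proof (cases "i \<in> {1..n}")
    case True
    then have "f i \<le> n" using assms by auto
    with True show ?thesis by (simp add: reflect_def)
  next
    case False
    then show ?thesis using PiE_arb[OF assms False] by (auto simp: reflect_def)
  qed
qed

lemma reflect_PiE:
  assumes "f \<in> {1..n} \<rightarrow>\<^sub>E {1..n}"
  shows "reflect n f \<in> {1..n} \<rightarrow>\<^sub>E {1..n}"
proof (rule PiE_I)
  fix x assume "x \<in> {1..n}"
  moreover from this have "f x \<in> {1..n}" using assms by blast
  ultimately show "reflect n f x \<in> {1..n}" by (auto simp: reflect_def)
qed (auto simp: reflect_def)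

lemma contraction_on_reflect:
  assumes "f \<in> {1..n} \<rightarrow>\<^sub>E {1..n}" "contraction_on {1..n} f"
  shows "contraction_on {1..n} (reflect n f)"
  unfolding contraction_on_def
proof (intro ballI)
  fix x y assume xy: "x \<in> {1..n}" "y \<in> {1..n}"
  then have "f x \<le> n" "f y \<le> n" using assms(1) by auto
  then have "\<bar>int (reflect n f x) - int (reflect n f y)\<bar> = \<bar>int (f x) - int (f y)\<bar>"
    using xy by (simp add: reflect_def of_nat_diff)
  then show "\<bar>int (reflect n f x) - int (reflect n f y)\<bar> \<le> \<bar>int x - int y\<bar>"
    using assms(2) xy by (simp add: contraction_on_def)
qed

lemma order_reversing_on_reflect:
  "order_preserving_on {1..n} f \<Longrightarrow> order_reversing_on {1..n} (reflect n f)"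
  by (auto simp: order_preserving_on_def order_reversing_on_def reflect_def intro!: diff_le_mono2)

lemma order_preserving_on_reflect:
  assumes "f \<in> {1..n} \<rightarrow>\<^sub>E {1..n}" "order_reversing_on {1..n} f"
  shows "order_preserving_on {1..n} (reflect n f)"
  unfolding order_preserving_on_def
proof (intro ballI impI)
  fix x y assume xy: "x \<in> {1..n}" "y \<in> {1..n}" "x \<le> y"
  then have "f y \<le> f x" "f x \<le> n"
    using assms by (auto simp: order_reversing_on_def)
  then show "reflect n f x \<le> reflect n f y" using xy by (simp add: reflect_def)
qed

lemma card_RCT: "card (RCT n) = card (OCT n)"
proof -
  have "reflect n (reflect n f) = f" if "f \<in> OCT n \<union> RCT n" for f
    using that reflect_reflect[of f n] by (auto simp: OCT_def RCT_def)
  moreover have "reflect n f \<in> RCT n" if "f \<in> OCT n" for f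
    using that reflect_PiE[of f n] contraction_on_reflect[of f n] order_reversing_on_reflect[of n f]
    by (simp add: OCT_def RCT_def)
  moreover have "reflect n f \<in> OCT n" if "f \<in> RCT n" for f
    using that reflect_PiE[of f n] contraction_on_reflect[of f n] order_preserving_on_reflect[of f n]
    by (simp add: OCT_def RCT_def)
  ultimately have "bij_betw (reflect n) (OCT n) (RCT n)"
    by (intro bij_betw_byWitness[where f' = "reflect n"]) auto
  then show ?thesis by (simp add: bij_betw_same_card)
qed

lemma const_in_OCT_Int_RCT: "c \<in> {1..n} \<Longrightarrow> (\<lambda>i\<in>{1..n}. c) \<in> OCT n \<inter> RCT n"
  by (simp add: OCT_def RCT_def contraction_on_def order_preserving_on_def order_reversing_on_def)

lemma OCT_Int_RCT:
  assumes "1 \<le> n"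
  shows "OCT n \<inter> RCT n = (\<lambda>c. \<lambda>i\<in>{1..n}. c) ` {1..n}"
proof (intro equalityI subsetI)
  fix f assume f: "f \<in> OCT n \<inter> RCT n"
  then have PiE: "f \<in> {1..n} \<rightarrow>\<^sub>E {1..n}" by (simp add: OCT_def)
  have "f 1 \<le> f i" "f i \<le> f 1" if i: "i \<in> {1..n}" for i
  proof -
    have "1 \<in> {1..n}" "1 \<le> i" using assms i by auto
    then show "f 1 \<le> f i" "f i \<le> f 1"
      using f i unfolding OCT_def RCT_def order_preserving_on_def order_reversing_on_def by blast+
  qed
  then have "f = (\<lambda>i\<in>{1..n}. f 1)"
    using PiE_arb[OF PiE] by (intro ext) (simp add: le_antisym)
  moreover have "f 1 \<in> {1..n}" using PiE assms by auto
  ultimately show "f \<in> (\<lambda>c. \<lambda>i\<in>{1..n}. c) ` {1..n}" by blast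
qed (use const_in_OCT_Int_RCT in blast)

lemma card_OCT_Int_RCT:
  assumes "1 \<le> n"
  shows "card (OCT n \<inter> RCT n) = n"
proof -
  have "inj_on (\<lambda>c. \<lambda>i\<in>{1..n}. c) {1..n}"
  proof (rule inj_onI)
    fix c d assume "(\<lambda>i\<in>{1..n}. c) = (\<lambda>i\<in>{1..n}. d)"
    from fun_cong[OF this, of 1] assms show "c = d" by simp
  qed
  then show ?thesis by (simp add: OCT_Int_RCT[OF assms] card_image)
qed

theorem corollary3p6:
  fixes n :: nat
  assumes "n \<ge> 1"
  shows "card (ORCT n) = (n + 1) * 2 ^ (n - 1) - n"
proof -
  have "card (ORCT n) + n = card (OCT n) + card (RCT n)"
    using card_Un_Int[OF finite_OCT finite_RCT] card_OCT_Int_RCT[OF assms]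
    by (simp add: ORCT_eq_OCT_Un_RCT)
  also have "\<dots> = (n + 1) * 2 ^ (n - 1)"
    using card_RCT card_OCT[OF assms] double_sum_Pow_diff_card[OF assms] by simp
  finally show ?thesis by simp
qed

end
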